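(* Let $a<b$ be real numbers, $f\in L^1(a,b)$, let $r_1,\dots,r_n\in\mathbb{Q}^+\cup\{0\}$ be pairwise distinct and $c_1,\dots,c_n\in\mathbb{C}$ not all zero. Then the fractional integral equation $$c_1I_{a^+}^{r_1}x+c_2I_{a^+}^{r_2}x+\dots+c_nI_{a^+}^{r_n}x=f$$ has at most one solution $x\in L^1(a,b)$.
   Context: For $\alpha>0$ and $g\in L^1(a,b)$, the left Riemann–Liouville fractional integral is $(I_{a^+}^{\alpha}g)(x)=\frac{1}{\Gamma(\alpha)}\int_a^x \frac{g(t)}{(x-t)^{1-\alpha}}\,dt$; $I_{a^+}^0$ is the identity. These operators map $L^1(a,b)$ to itself and satisfy $I_{a^+}^{\alpha}I_{a^+}^{\beta}=I_{a^+}^{\alpha+\beta}$. *)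

theory Defs
  imports "HOL-Analysis.Analysis"
begin

definition RL_int :: "real \<Rightarrow> real \<Rightarrow> (real \<Rightarrow> complex) \<Rightarrow> real \<Rightarrow> complex" where
  "RL_int a \<alpha> g x =
     (if \<alpha> = 0 then g x
      else complex_of_real (1 / Gamma \<alpha>) *
           (LINT t:{a<..<x}|lborel. complex_of_real ((x - t) powr (\<alpha> - 1)) * g t))"

end

theory Submission
  imports Defs
begin

text \<open>
  Subtracting two solutions, it suffices to show that a function z, integrable and supported in
  (a, b), vanishes when \<open>\<Sum>\<^sub>i c\<^sub>i I\<^bsup>r\<^sub>i\<^esup> z = 0\<close>. Let \<open>\<alpha>\<close> be the smallest order with a nonzero
  coefficient. By the semigroup law \<open>I\<^bsup>r\<^sub>i\<^esup> = I\<^bsup>r\<^sub>i - \<alpha>\<^esup> I\<^bsup>\<alpha>\<^esup>\<close>, the function \<open>u = I\<^bsup>\<alpha>\<^esup> z\<close> satisfies a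
  Volterra equation \<open>u = \<Sum>\<^sub>i d\<^sub>i I\<^bsup>\<beta>\<^sub>i\<^esup> u\<close> with all \<open>\<beta>\<^sub>i > 0\<close>. If u vanishes on (a, c), then on
  (c, c + h) the \<open>L\<^sup>1\<close> norm of u is bounded by a multiple of itself, with a factor that tends to 0
  with h; so u vanishes on consecutive windows of a fixed length, hence on (a, b). Finally
  \<open>I\<^bsup>\<alpha>\<^esup>\<close> is injective: composing with \<open>I\<^bsup>m - \<alpha>\<^esup>\<close>, \<open>m = \<lceil>\<alpha>\<rceil>\<close>, reduces this to integer orders,
  and \<open>I\<^sup>1 z = 0\<close> says that z has vanishing integral over every half-line.
\<close>

section \<open>The Riemann-Liouville kernel\<close>

definition RL_kernel :: "real \<Rightarrow> real \<Rightarrow> real \<Rightarrow> real \<Rightarrow> real" where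
  "RL_kernel a \<alpha> t s = (if a < s \<and> s < t then (t - s) powr (\<alpha> - 1) else 0)"

definition RL_conv :: "real \<Rightarrow> real \<Rightarrow> (real \<Rightarrow> complex) \<Rightarrow> real \<Rightarrow> complex" where
  "RL_conv a \<alpha> g t = (\<integral> s. complex_of_real (RL_kernel a \<alpha> t s) * g s \<partial>lborel)"

lemma RL_kernel_nonneg [simp]: "RL_kernel a \<alpha> t s \<ge> 0"
  by (simp add: RL_kernel_def)

lemma borel_measurable_RL_kernel [measurable]:
  assumes [measurable]: "f \<in> borel_measurable M" "g \<in> borel_measurable M"
  shows "(\<lambda>x. RL_kernel a \<alpha> (f x) (g x)) \<in> borel_measurable M"
  unfolding RL_kernel_def by measurable

lemma RL_int_eq_RL_conv:
  "\<alpha> \<noteq> 0 \<Longrightarrow> RL_int a \<alpha> g t = complex_of_real (1 / Gamma \<alpha>) * RL_conv a \<alpha> g t"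
  unfolding RL_int_def RL_conv_def set_lebesgue_integral_def
  by (auto intro!: Bochner_Integration.integral_cong simp: RL_kernel_def indicator_def)

lemma RL_int_0 [simp]: "RL_int a 0 g = g"
  by (simp add: RL_int_def fun_eq_iff)

lemma RL_conv_cmult: "RL_conv a \<alpha> (\<lambda>s. c * g s) t = c * RL_conv a \<alpha> g t"
  by (simp add: RL_conv_def mult.left_commute)

lemma RL_conv_restrict:
  "t \<le> b \<Longrightarrow> RL_conv a \<alpha> (\<lambda>s. indicator {a<..<b} s *\<^sub>R g s) t = RL_conv a \<alpha> g t"
  unfolding RL_conv_def
  by (auto intro!: Bochner_Integration.integral_cong simp: RL_kernel_def indicator_def)

lemma RL_int_restrict:
  "t \<in> {a<..<b} \<Longrightarrow> RL_int a \<alpha> (\<lambda>s. indicator {a<..<b} s *\<^sub>R g s) t = RL_int a \<alpha> g t"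
  by (cases "\<alpha> = 0") (auto simp: RL_int_eq_RL_conv RL_conv_restrict)

lemma borel_measurable_RL_conv [measurable]:
  assumes [measurable]: "g \<in> borel_measurable borel"
  shows "RL_conv a \<alpha> g \<in> borel_measurable borel"
proof -
  have "(\<lambda>t. \<integral> s. complex_of_real (RL_kernel a \<alpha> t s) * g s \<partial>lborel) \<in> borel_measurable lborel"
    by (rule lborel.borel_measurable_lebesgue_integral) measurable
  then show ?thesis
    unfolding RL_conv_def[abs_def] by simp
qed

lemma norm_RL_conv_le:
  "ennreal (norm (RL_conv a \<alpha> g t)) \<le> (\<integral>\<^sup>+ s. ennreal (RL_kernel a \<alpha> t s) * ennreal (norm (g s)) \<partial>lborel)"
proof (cases "integrable lborel (\<lambda>s. complex_of_real (RL_kernel a \<alpha> t s) * g s)")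
  case True
  then have "ennreal (norm (RL_conv a \<alpha> g t))
      \<le> (\<integral>\<^sup>+ s. ennreal (norm (complex_of_real (RL_kernel a \<alpha> t s) * g s)) \<partial>lborel)"
    unfolding RL_conv_def by (rule integral_norm_bound_ennreal)
  then show ?thesis
    by (simp add: norm_mult ennreal_mult)
qed (simp add: RL_conv_def not_integrable_integral_eq)

lemma integrable_RL_kernel_mult:
  assumes "g \<in> borel_measurable borel"
    and "(\<integral>\<^sup>+ s. ennreal (RL_kernel a \<alpha> t s) * ennreal (norm (g s)) \<partial>lborel) < \<infinity>"
  shows "integrable lborel (\<lambda>s. complex_of_real (RL_kernel a \<alpha> t s) * g s)"
  using assms by (subst integrable_iff_bounded) (simp add: norm_mult ennreal_mult)

lemma RL_conv_diff:
  assumes "g \<in> borel_measurable borel" "h \<in> borel_measurable borel"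
    and "(\<integral>\<^sup>+ s. ennreal (RL_kernel a \<alpha> t s) * ennreal (norm (g s)) \<partial>lborel) < \<infinity>"
    and "(\<integral>\<^sup>+ s. ennreal (RL_kernel a \<alpha> t s) * ennreal (norm (h s)) \<partial>lborel) < \<infinity>"
  shows "RL_conv a \<alpha> (\<lambda>s. g s - h s) t = RL_conv a \<alpha> g t - RL_conv a \<alpha> h t"
  unfolding RL_conv_def right_diff_distrib
  by (intro Bochner_Integration.integral_diff integrable_RL_kernel_mult assms)

section \<open>Integrability of fractional integrals\<close>

lemma has_integral_powr_shifted:
  fixes \<alpha> s d :: real
  assumes "\<alpha> > 0" "s \<le> d"
  shows "((\<lambda>t. (t - s) powr (\<alpha> - 1)) has_integral (d - s) powr \<alpha> / \<alpha>) {s..d}"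
proof -
  have "((\<lambda>x. x powr (\<alpha> - 1)) has_integral (d - s) powr \<alpha> / \<alpha>) (cbox 0 (d - s))"
    using has_integral_powr_from_0[of "\<alpha> - 1" "d - s"] assms by auto
  from has_integral_affinity'[OF this, of 1 "-s"] show ?thesis
    by (simp add: cbox_interval)
qed

lemma nn_integral_powr_shifted:
  fixes \<alpha> s d :: real
  assumes "\<alpha> > 0" "s \<le> d"
  shows "(\<integral>\<^sup>+ t. indicator {s<..<d} t * ennreal ((t - s) powr (\<alpha> - 1)) \<partial>lborel)
    = ennreal ((d - s) powr \<alpha> / \<alpha>)"
proof -
  have "((\<lambda>t. (t - s) powr (\<alpha> - 1)) has_integral (d - s) powr \<alpha> / \<alpha>) {s<..<d}"
    using has_integral_powr_shifted[OF assms] by (simp add: has_integral_Icc_iff_Ioo)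
  from nn_integral_has_integral_lebesgue'[OF _ this] show ?thesis
    by (simp add: mult.commute)
qed

lemma nn_integral_RL_kernel_fst:
  assumes "\<alpha> > 0"
  shows "(\<integral>\<^sup>+ t. indicator {c<..<d} t * ennreal (RL_kernel c \<alpha> t s) \<partial>lborel)
    = indicator {c<..<d} s * ennreal ((d - s) powr \<alpha> / \<alpha>)"
proof (cases "s \<in> {c<..<d}")
  case True
  then have "(\<integral>\<^sup>+ t. indicator {c<..<d} t * ennreal (RL_kernel c \<alpha> t s) \<partial>lborel)
      = (\<integral>\<^sup>+ t. indicator {s<..<d} t * ennreal ((t - s) powr (\<alpha> - 1)) \<partial>lborel)"
    by (intro nn_integral_cong) (auto simp: RL_kernel_def indicator_def)
  with True show ?thesis
    using nn_integral_powr_shifted[OF assms, of s d] by simp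
next
  case False
  then have zero: "indicator {c<..<d} t * ennreal (RL_kernel c \<alpha> t s) = 0" for t
    by (auto simp: RL_kernel_def indicator_def)
  show ?thesis
    using False by (simp only: zero) simp
qed

lemma nn_integral_RL_kernel_le:
  fixes F :: "real \<Rightarrow> ennreal"
  assumes "\<alpha> > 0" and [measurable]: "F \<in> borel_measurable borel"
  shows "(\<integral>\<^sup>+ t. indicator {c<..<d} t * (\<integral>\<^sup>+ s. ennreal (RL_kernel c \<alpha> t s) * F s \<partial>lborel) \<partial>lborel)
    \<le> ennreal ((d - c) powr \<alpha> / \<alpha>) * (\<integral>\<^sup>+ s. indicator {c<..<d} s * F s \<partial>lborel)"
proof -
  have "(\<integral>\<^sup>+ t. indicator {c<..<d} t * (\<integral>\<^sup>+ s. ennreal (RL_kernel c \<alpha> t s) * F s \<partial>lborel) \<partial>lborel)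
      = (\<integral>\<^sup>+ t. (\<integral>\<^sup>+ s. F s * (indicator {c<..<d} t * ennreal (RL_kernel c \<alpha> t s)) \<partial>lborel) \<partial>lborel)"
    by (subst nn_integral_cmult[symmetric]) (auto intro!: nn_integral_cong simp: mult_ac)
  also have "\<dots> = (\<integral>\<^sup>+ s. (\<integral>\<^sup>+ t. F s * (indicator {c<..<d} t * ennreal (RL_kernel c \<alpha> t s)) \<partial>lborel) \<partial>lborel)"
    by (rule lborel_pair.Fubini') measurable
  also have "\<dots> = (\<integral>\<^sup>+ s. F s * (indicator {c<..<d} s * ennreal ((d - s) powr \<alpha> / \<alpha>)) \<partial>lborel)"
    by (simp add: nn_integral_cmult nn_integral_RL_kernel_fst[OF assms(1)])
  also have "\<dots> \<le> (\<integral>\<^sup>+ s. ennreal ((d - c) powr \<alpha> / \<alpha>) * (indicator {c<..<d} s * F s) \<partial>lborel)"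
    using assms(1)
    by (intro nn_integral_mono)
       (auto simp: indicator_def mult_ac intro!: mult_left_mono ennreal_leI divide_right_mono powr_mono2)
  also have "\<dots> = ennreal ((d - c) powr \<alpha> / \<alpha>) * (\<integral>\<^sup>+ s. indicator {c<..<d} s * F s \<partial>lborel)"
    by (rule nn_integral_cmult) measurable
  finally show ?thesis .
qed

lemma nn_integral_RL_kernel_norm_finite:
  fixes g :: "real \<Rightarrow> 'b::{banach, second_countable_topology}"
  assumes "integrable lborel g" "\<alpha> > 0"
  shows "(\<integral>\<^sup>+ t. indicator {a<..<b} t
      * (\<integral>\<^sup>+ s. ennreal (RL_kernel a \<alpha> t s) * ennreal (norm (g s)) \<partial>lborel) \<partial>lborel) < \<infinity>"
proof -
  have [measurable]: "g \<in> borel_measurable borel"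
    using assms(1) by auto
  have "(\<integral>\<^sup>+ t. indicator {a<..<b} t
      * (\<integral>\<^sup>+ s. ennreal (RL_kernel a \<alpha> t s) * ennreal (norm (g s)) \<partial>lborel) \<partial>lborel)
      \<le> ennreal ((b - a) powr \<alpha> / \<alpha>) * (\<integral>\<^sup>+ s. indicator {a<..<b} s * ennreal (norm (g s)) \<partial>lborel)"
    by (rule nn_integral_RL_kernel_le) (use assms in auto)
  also have "\<dots> \<le> ennreal ((b - a) powr \<alpha> / \<alpha>) * (\<integral>\<^sup>+ s. ennreal (norm (g s)) \<partial>lborel)"
    by (intro mult_left_mono nn_integral_mono) (auto simp: indicator_def)
  also have "\<dots> < \<infinity>"
    using assms(1) by (simp add: integrable_iff_bounded ennreal_mult_less_top)
  finally show ?thesis .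
qed

lemma AE_nn_integral_RL_kernel_finite:
  fixes g :: "real \<Rightarrow> 'b::{banach, second_countable_topology}"
  assumes "integrable lborel g" "\<alpha> > 0"
  shows "AE t in lborel. t \<in> {a<..<b} \<longrightarrow>
    (\<integral>\<^sup>+ s. ennreal (RL_kernel a \<alpha> t s) * ennreal (norm (g s)) \<partial>lborel) < \<infinity>"
proof -
  have [measurable]: "g \<in> borel_measurable borel"
    using assms(1) by auto
  have "AE t in lborel. indicator {a<..<b} t
      * (\<integral>\<^sup>+ s. ennreal (RL_kernel a \<alpha> t s) * ennreal (norm (g s)) \<partial>lborel) \<noteq> \<infinity>"
    using nn_integral_RL_kernel_norm_finite[OF assms, of a b] by (intro nn_integral_PInf_AE) auto
  then show ?thesis
    by eventually_elim (auto simp: indicator_def top.not_eq_extremum)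
qed

lemma integrable_RL_conv:
  fixes g :: "real \<Rightarrow> complex"
  assumes "integrable lborel g" "\<alpha> > 0"
  shows "integrable lborel (\<lambda>t. indicator {a<..<b} t *\<^sub>R RL_conv a \<alpha> g t)"
proof -
  have [measurable]: "g \<in> borel_measurable borel"
    using assms(1) by auto
  have "(\<integral>\<^sup>+ t. ennreal (norm (indicator {a<..<b} t *\<^sub>R RL_conv a \<alpha> g t)) \<partial>lborel)
      \<le> (\<integral>\<^sup>+ t. indicator {a<..<b} t
          * (\<integral>\<^sup>+ s. ennreal (RL_kernel a \<alpha> t s) * ennreal (norm (g s)) \<partial>lborel) \<partial>lborel)"
    using norm_RL_conv_le by (intro nn_integral_mono) (auto simp: indicator_def)
  also have "\<dots> < \<infinity>"
    by (rule nn_integral_RL_kernel_norm_finite[OF assms])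
  finally show ?thesis
    by (subst integrable_iff_bounded) auto
qed

section \<open>The semigroup law\<close>

lemma has_integral_Beta_shifted:
  fixes \<alpha> \<beta> s t :: real
  assumes "\<alpha> > 0" "\<beta> > 0" "s < t"
  shows "((\<lambda>u. (t - u) powr (\<beta> - 1) * (u - s) powr (\<alpha> - 1))
    has_integral Beta \<alpha> \<beta> * (t - s) powr (\<alpha> + \<beta> - 1)) {s..t}"
proof -
  define L where "L = t - s"
  have L: "L > 0"
    using assms by (simp add: L_def)
  have "((\<lambda>v. v powr (\<alpha> - 1) * (1 - v) powr (\<beta> - 1)) has_integral Beta \<alpha> \<beta>) (cbox 0 1)"
    using has_integral_Beta_real[OF assms(1,2)] by simp
  note affine = has_integral_affinity'[OF this, of "1 / L" "- s / L"]
  have bounds: "(0 - - s / L) /\<^sub>R (1 / L) = s" "(1 - - s / L) /\<^sub>R (1 / L) = t"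
    "Beta \<alpha> \<beta> /\<^sub>R (1 / L) ^ DIM(real) = L * Beta \<alpha> \<beta>"
    using L by (auto simp: L_def field_simps)
  have shift: "u / L - s / L = (u - s) / L" "1 - (u - s) / L = (t - u) / L" for u
  proof -
    show "u / L - s / L = (u - s) / L"
      by (simp add: diff_divide_distrib)
    have "1 - (u - s) / L = (L - (u - s)) / L"
      using L by (simp add: diff_divide_distrib)
    then show "1 - (u - s) / L = (t - u) / L"
      by (simp add: L_def)
  qed
  have "((\<lambda>u. ((u - s) / L) powr (\<alpha> - 1) * ((t - u) / L) powr (\<beta> - 1)) has_integral L * Beta \<alpha> \<beta>) {s..t}"
    using affine L unfolding bounds by (simp add: cbox_interval shift)
  from has_integral_mult_right[OF this, of "L powr (\<alpha> + \<beta> - 2)"]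
  have "((\<lambda>u. L powr (\<alpha> + \<beta> - 2) * (((u - s) / L) powr (\<alpha> - 1) * ((t - u) / L) powr (\<beta> - 1)))
      has_integral Beta \<alpha> \<beta> * L powr (\<alpha> + \<beta> - 1)) {s..t}"
    using L powr_add[of L "\<alpha> + \<beta> - 2" 1] by (simp add: mult_ac)
  then show ?thesis
    unfolding L_def[symmetric]
  proof (rule has_integral_eq[rotated])
    fix u assume "u \<in> {s..t}"
    then show "L powr (\<alpha> + \<beta> - 2) * (((u - s) / L) powr (\<alpha> - 1) * ((t - u) / L) powr (\<beta> - 1))
        = (t - u) powr (\<beta> - 1) * (u - s) powr (\<alpha> - 1)"
      using L by (simp add: powr_divide powr_add[symmetric] field_simps)
  qed
qed

lemma Beta_real_pos: "\<alpha> > 0 \<Longrightarrow> \<beta> > 0 \<Longrightarrow> Beta \<alpha> \<beta> > (0::real)"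
  by (simp add: Beta_def Gamma_real_pos)

lemma nn_integral_RL_kernel_mult:
  assumes "\<alpha> > 0" "\<beta> > 0"
  shows "(\<integral>\<^sup>+ u. ennreal (RL_kernel a \<beta> t u * RL_kernel a \<alpha> u s) \<partial>lborel)
    = ennreal (Beta \<alpha> \<beta> * RL_kernel a (\<alpha> + \<beta>) t s)"
proof (cases "a < s \<and> s < t")
  case True
  have "(\<integral>\<^sup>+ u. ennreal (RL_kernel a \<beta> t u * RL_kernel a \<alpha> u s) \<partial>lborel)
      = (\<integral>\<^sup>+ u. indicator {s<..<t} u * ennreal ((t - u) powr (\<beta> - 1) * (u - s) powr (\<alpha> - 1)) \<partial>lborel)"
    using True by (intro nn_integral_cong) (auto simp: RL_kernel_def indicator_def)
  also have "\<dots> = ennreal (Beta \<alpha> \<beta> * (t - s) powr (\<alpha> + \<beta> - 1))"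
    using has_integral_Beta_shifted[OF assms, of s t] True
    by (subst mult.commute, intro nn_integral_has_integral_lebesgue')
       (auto simp: has_integral_Icc_iff_Ioo)
  finally show ?thesis
    using True by (simp add: RL_kernel_def)
next
  case False
  then have zero: "RL_kernel a \<beta> t u * RL_kernel a \<alpha> u s = 0" for u
    by (auto simp: RL_kernel_def)
  show ?thesis
    using False by (simp only: zero) (auto simp: RL_kernel_def)
qed

lemma integral_RL_kernel_mult:
  assumes "\<alpha> > 0" "\<beta> > 0"
  shows "(\<integral> u. RL_kernel a \<beta> t u * RL_kernel a \<alpha> u s \<partial>lborel) = Beta \<alpha> \<beta> * RL_kernel a (\<alpha> + \<beta>) t s"
proof -
  have "has_bochner_integral lborel (\<lambda>u. RL_kernel a \<beta> t u * RL_kernel a \<alpha> u s)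
      (Beta \<alpha> \<beta> * RL_kernel a (\<alpha> + \<beta>) t s)"
    using nn_integral_RL_kernel_mult[OF assms] Beta_real_pos[OF assms]
    by (intro has_bochner_integral_nn_integral) auto
  then show ?thesis
    by (simp add: has_bochner_integral_iff)
qed

lemma integrable_RL_kernel_product:
  fixes g :: "real \<Rightarrow> complex"
  assumes [measurable]: "g \<in> borel_measurable borel" and "\<alpha> > 0" "\<beta> > 0"
    and "(\<integral>\<^sup>+ s. ennreal (RL_kernel a (\<alpha> + \<beta>) t s) * ennreal (norm (g s)) \<partial>lborel) < \<infinity>"
  shows "integrable (lborel \<Otimes>\<^sub>M lborel)
    (\<lambda>(u, s). complex_of_real (RL_kernel a \<beta> t u * RL_kernel a \<alpha> u s) * g s)"
    (is "integrable _ ?H")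
proof -
  have inner: "(\<integral>\<^sup>+ u. ennreal (norm (?H (u, s))) \<partial>lborel)
      = ennreal (Beta \<alpha> \<beta>) * (ennreal (RL_kernel a (\<alpha> + \<beta>) t s) * ennreal (norm (g s)))" for s
  proof -
    have "(\<integral>\<^sup>+ u. ennreal (norm (?H (u, s))) \<partial>lborel)
        = (\<integral>\<^sup>+ u. ennreal (RL_kernel a \<beta> t u * RL_kernel a \<alpha> u s) \<partial>lborel) * ennreal (norm (g s))"
      by (subst nn_integral_multc[symmetric]) (auto simp: norm_mult ennreal_mult)
    also have "\<dots> = ennreal (Beta \<alpha> \<beta> * RL_kernel a (\<alpha> + \<beta>) t s) * ennreal (norm (g s))"
      by (simp only: nn_integral_RL_kernel_mult[OF assms(2,3)])
    finally show ?thesis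
      using Beta_real_pos[OF assms(2,3)] by (simp add: ennreal_mult mult_ac)
  qed
  have "(\<integral>\<^sup>+ p. ennreal (norm (?H p)) \<partial>(lborel \<Otimes>\<^sub>M lborel))
      = (\<integral>\<^sup>+ s. (\<integral>\<^sup>+ u. ennreal (norm (?H (u, s))) \<partial>lborel) \<partial>lborel)"
    by (rule lborel_pair.nn_integral_snd[symmetric]) measurable
  also have "\<dots> = ennreal (Beta \<alpha> \<beta>)
      * (\<integral>\<^sup>+ s. ennreal (RL_kernel a (\<alpha> + \<beta>) t s) * ennreal (norm (g s)) \<partial>lborel)"
    unfolding inner by (rule nn_integral_cmult) measurable
  also have "\<dots> < \<infinity>"
    using assms(4) by (simp add: ennreal_mult_less_top)
  finally show ?thesis
    by (subst integrable_iff_bounded) auto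
qed

lemma RL_conv_RL_conv:
  fixes g :: "real \<Rightarrow> complex"
  assumes "g \<in> borel_measurable borel" and "\<alpha> > 0" "\<beta> > 0"
    and "(\<integral>\<^sup>+ s. ennreal (RL_kernel a (\<alpha> + \<beta>) t s) * ennreal (norm (g s)) \<partial>lborel) < \<infinity>"
  shows "RL_conv a \<beta> (RL_conv a \<alpha> g) t = complex_of_real (Beta \<alpha> \<beta>) * RL_conv a (\<alpha> + \<beta>) g t"
proof -
  let ?H = "\<lambda>u s. complex_of_real (RL_kernel a \<beta> t u * RL_kernel a \<alpha> u s) * g s"
  have "RL_conv a \<beta> (RL_conv a \<alpha> g) t = (\<integral> u. (\<integral> s. ?H u s \<partial>lborel) \<partial>lborel)"
    by (simp add: RL_conv_def mult.assoc)
  also have "\<dots> = (\<integral> s. (\<integral> u. ?H u s \<partial>lborel) \<partial>lborel)"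
    by (rule lborel_pair.Fubini_integral[symmetric, OF integrable_RL_kernel_product[OF assms]])
  also have "\<dots> = (\<integral> s. complex_of_real (Beta \<alpha> \<beta> * RL_kernel a (\<alpha> + \<beta>) t s) * g s \<partial>lborel)"
    by (simp add: integral_complex_of_real integral_RL_kernel_mult[OF assms(2,3)] del: of_real_mult)
  also have "\<dots> = complex_of_real (Beta \<alpha> \<beta>) * RL_conv a (\<alpha> + \<beta>) g t"
    by (simp add: RL_conv_def mult.assoc)
  finally show ?thesis .
qed

lemma RL_int_semigroup:
  fixes g :: "real \<Rightarrow> complex"
  assumes "integrable lborel g" "\<alpha> \<ge> 0" "\<beta> \<ge> 0"
  shows "AE t in lborel. t \<in> {a<..<b} \<longrightarrow> RL_int a \<beta> (RL_int a \<alpha> g) t = RL_int a (\<alpha> + \<beta>) g t"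
proof (cases "\<alpha> = 0 \<or> \<beta> = 0")
  case True
  then show ?thesis
    by (intro AE_I2) auto
next
  case False
  with assms have pos: "\<alpha> > 0" "\<beta> > 0"
    by auto
  have [measurable]: "g \<in> borel_measurable borel"
    using assms(1) by auto
  have RL_int_\<alpha>: "RL_int a \<alpha> g = (\<lambda>u. complex_of_real (1 / Gamma \<alpha>) * RL_conv a \<alpha> g u)"
    using pos by (simp add: fun_eq_iff RL_int_eq_RL_conv)
  have "AE t in lborel. t \<in> {a<..<b} \<longrightarrow>
      (\<integral>\<^sup>+ s. ennreal (RL_kernel a (\<alpha> + \<beta>) t s) * ennreal (norm (g s)) \<partial>lborel) < \<infinity>"
    using pos by (intro AE_nn_integral_RL_kernel_finite assms(1)) auto
  then show ?thesis
  proof eventually_elim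
    case (elim t)
    show ?case
    proof
      assume "t \<in> {a<..<b}"
      with elim have "RL_conv a \<beta> (RL_conv a \<alpha> g) t = complex_of_real (Beta \<alpha> \<beta>) * RL_conv a (\<alpha> + \<beta>) g t"
        using RL_conv_RL_conv[OF _ pos] by simp
      then have "RL_int a \<beta> (RL_int a \<alpha> g) t
          = complex_of_real (1 / Gamma \<beta>) * (complex_of_real (1 / Gamma \<alpha>)
              * (complex_of_real (Beta \<alpha> \<beta>) * RL_conv a (\<alpha> + \<beta>) g t))"
        using pos by (simp only: RL_int_\<alpha> RL_int_eq_RL_conv[of \<beta>] RL_conv_cmult)
      also have "\<dots> = complex_of_real (1 / Gamma \<beta> * (1 / Gamma \<alpha>) * Beta \<alpha> \<beta>) * RL_conv a (\<alpha> + \<beta>) g t"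
        by (simp only: of_real_mult mult.assoc)
      also have "1 / Gamma \<beta> * (1 / Gamma \<alpha>) * Beta \<alpha> \<beta> = 1 / Gamma (\<alpha> + \<beta>)"
        using pos[THEN Gamma_real_pos] by (simp add: Beta_def)
      also have "complex_of_real (1 / Gamma (\<alpha> + \<beta>)) * RL_conv a (\<alpha> + \<beta>) g t = RL_int a (\<alpha> + \<beta>) g t"
        using pos by (simp add: RL_int_eq_RL_conv)
      finally show "RL_int a \<beta> (RL_int a \<alpha> g) t = RL_int a (\<alpha> + \<beta>) g t" .
    qed
  qed
qed

lemma integrable_RL_int:
  fixes g :: "real \<Rightarrow> complex"
  assumes "integrable lborel g" "\<alpha> \<ge> 0"
  shows "integrable lborel (\<lambda>t. indicator {a<..<b} t *\<^sub>R RL_int a \<alpha> g t)"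
proof (cases "\<alpha> = 0")
  case True
  then show ?thesis
    using assms(1) by (simp add: integrable_mult_indicator)
next
  case False
  with assms have "integrable lborel (\<lambda>t. complex_of_real (1 / Gamma \<alpha>) * (indicator {a<..<b} t *\<^sub>R RL_conv a \<alpha> g t))"
    by (intro integrable_mult_right integrable_RL_conv) auto
  with False show ?thesis
    by (simp add: RL_int_eq_RL_conv mult.left_commute)
qed

section \<open>Volterra equations of positive order\<close>

lemma norm_RL_conv_le_vanishing:
  assumes "AE s in lborel. s \<in> {a<..<c} \<longrightarrow> g s = 0" "a \<le> c"
  shows "ennreal (norm (RL_conv a \<beta> g t))
    \<le> (\<integral>\<^sup>+ s. ennreal (RL_kernel c \<beta> t s) * ennreal (norm (g s)) \<partial>lborel)"
proof -
  have "(\<integral>\<^sup>+ s. ennreal (RL_kernel a \<beta> t s) * ennreal (norm (g s)) \<partial>lborel)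
      = (\<integral>\<^sup>+ s. ennreal (RL_kernel c \<beta> t s) * ennreal (norm (g s)) \<partial>lborel)"
    using assms(1) AE_lborel_singleton[of c]
    by (intro nn_integral_cong_AE, eventually_elim) (use assms(2) in \<open>auto simp: RL_kernel_def\<close>)
  then show ?thesis
    using norm_RL_conv_le[of a \<beta> g t] by simp
qed

lemma ennreal_le_mult_imp_zero:
  fixes A :: ennreal and H :: real
  assumes "A \<le> ennreal H * A" "A < \<infinity>" "H < 1"
  shows "A = 0"
proof -
  obtain r where r: "A = ennreal r" "r \<ge> 0"
    using assms(2) by (cases A) auto
  show ?thesis
  proof (cases "H \<ge> 0")
    case True
    with assms(1) r have "r \<le> H * r"
      by (simp add: ennreal_mult[symmetric])
    with assms(3) r show ?thesis
      by (simp add: mult_le_cancel_right1)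
  next
    case False
    with assms(1) r show ?thesis
      by (simp add: ennreal_neg)
  qed
qed

lemma AE_norm_le_sum_RL_kernel:
  fixes g :: "real \<Rightarrow> complex" and S :: "'i set" and \<beta> :: "'i \<Rightarrow> real" and d :: "'i \<Rightarrow> complex"
  assumes eq: "AE t in lborel. t \<in> {a<..<b} \<longrightarrow> g t = (\<Sum>i\<in>S. d i * RL_conv a (\<beta> i) g t)"
    and vanish: "AE s in lborel. s \<in> {a<..<c} \<longrightarrow> g s = 0" "a \<le> c"
  shows "AE t in lborel. t \<in> {a<..<b} \<longrightarrow> ennreal (norm (g t))
    \<le> (\<Sum>i\<in>S. ennreal (norm (d i)) * (\<integral>\<^sup>+ s. ennreal (RL_kernel c (\<beta> i) t s) * ennreal (norm (g s)) \<partial>lborel))"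
  using eq
proof eventually_elim
  case (elim t)
  show ?case
  proof
    assume "t \<in> {a<..<b}"
    with elim have "ennreal (norm (g t)) \<le> ennreal (\<Sum>i\<in>S. norm (d i) * norm (RL_conv a (\<beta> i) g t))"
      using norm_sum[of "\<lambda>i. d i * RL_conv a (\<beta> i) g t" S] by (auto simp: norm_mult intro!: ennreal_leI)
    also have "\<dots> = (\<Sum>i\<in>S. ennreal (norm (d i)) * ennreal (norm (RL_conv a (\<beta> i) g t)))"
      by (subst sum_ennreal[symmetric]) (auto simp: ennreal_mult)
    also have "\<dots> \<le> (\<Sum>i\<in>S. ennreal (norm (d i))
        * (\<integral>\<^sup>+ s. ennreal (RL_kernel c (\<beta> i) t s) * ennreal (norm (g s)) \<partial>lborel))"
      using norm_RL_conv_le_vanishing[OF vanish] by (intro sum_mono mult_left_mono) auto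
    finally show "ennreal (norm (g t)) \<le> \<dots>" .
  qed
qed

lemma nn_integral_Volterra_step_le:
  fixes g :: "real \<Rightarrow> complex" and S :: "'i set" and \<beta> :: "'i \<Rightarrow> real" and d :: "'i \<Rightarrow> complex"
  assumes [measurable]: "g \<in> borel_measurable borel" and supp: "\<And>s. s \<notin> {a<..<b} \<Longrightarrow> g s = 0"
    and S: "finite S" "\<And>i. i \<in> S \<Longrightarrow> \<beta> i > 0"
    and eq: "AE t in lborel. t \<in> {a<..<b} \<longrightarrow> g t = (\<Sum>i\<in>S. d i * RL_conv a (\<beta> i) g t)"
    and vanish: "AE s in lborel. s \<in> {a<..<c} \<longrightarrow> g s = 0" "a \<le> c"
  shows "(\<integral>\<^sup>+ t. indicator {c<..<c + h} t * ennreal (norm (g t)) \<partial>lborel)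
    \<le> ennreal (\<Sum>i\<in>S. norm (d i) * (h powr \<beta> i / \<beta> i))
      * (\<integral>\<^sup>+ t. indicator {c<..<c + h} t * ennreal (norm (g t)) \<partial>lborel)"
    (is "?A \<le> _")
proof -
  define K where "K i t = indicator {c<..<c + h} t
    * (\<integral>\<^sup>+ s. ennreal (RL_kernel c (\<beta> i) t s) * ennreal (norm (g s)) \<partial>lborel)" for i t
  have [measurable]: "K i \<in> borel_measurable borel" for i
    unfolding K_def by measurable
  from AE_norm_le_sum_RL_kernel[OF eq vanish]
  have "AE t in lborel. indicator {c<..<c + h} t * ennreal (norm (g t)) \<le> (\<Sum>i\<in>S. ennreal (norm (d i)) * K i t)"
  proof eventually_elim
    case (elim t)
    show ?case
    proof (cases "t \<in> {c<..<c + h}")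
      case True
      with elim supp[of t] show ?thesis
        by (cases "t \<in> {a<..<b}") (auto simp: K_def)
    qed (simp add: K_def)
  qed
  then have "?A \<le> (\<integral>\<^sup>+ t. (\<Sum>i\<in>S. ennreal (norm (d i)) * K i t) \<partial>lborel)"
    by (rule nn_integral_mono_AE)
  also have "\<dots> = (\<Sum>i\<in>S. ennreal (norm (d i)) * (\<integral>\<^sup>+ t. K i t \<partial>lborel))"
    by (simp add: nn_integral_sum nn_integral_cmult)
  also have "\<dots> \<le> (\<Sum>i\<in>S. ennreal (norm (d i)) * (ennreal (h powr \<beta> i / \<beta> i) * ?A))"
    unfolding K_def using nn_integral_RL_kernel_le[OF S(2), of _ "\<lambda>s. ennreal (norm (g s))" c "c + h"]
    by (intro sum_mono mult_left_mono) auto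
  also have "\<dots> = (\<Sum>i\<in>S. ennreal (norm (d i) * (h powr \<beta> i / \<beta> i))) * ?A"
    unfolding sum_distrib_right
  proof (intro sum.cong refl)
    fix i assume "i \<in> S"
    then have "h powr \<beta> i / \<beta> i \<ge> 0"
      using S(2)[of i] by simp
    then show "ennreal (norm (d i)) * (ennreal (h powr \<beta> i / \<beta> i) * ?A)
        = ennreal (norm (d i) * (h powr \<beta> i / \<beta> i)) * ?A"
      by (simp only: ennreal_mult[OF norm_ge_zero] mult.assoc)
  qed
  also have "\<dots> = ennreal (\<Sum>i\<in>S. norm (d i) * (h powr \<beta> i / \<beta> i)) * ?A"
    by (subst sum_ennreal) (auto simp: less_imp_le[OF S(2)])
  finally show ?thesis .
qed

lemma RL_conv_Volterra_step:
  fixes g :: "real \<Rightarrow> complex" and S :: "'i set" and \<beta> :: "'i \<Rightarrow> real" and d :: "'i \<Rightarrow> complex"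
  assumes g: "integrable lborel g" "\<And>s. s \<notin> {a<..<b} \<Longrightarrow> g s = 0"
    and S: "finite S" "\<And>i. i \<in> S \<Longrightarrow> \<beta> i > 0"
    and eq: "AE t in lborel. t \<in> {a<..<b} \<longrightarrow> g t = (\<Sum>i\<in>S. d i * RL_conv a (\<beta> i) g t)"
    and vanish: "AE s in lborel. s \<in> {a<..<c} \<longrightarrow> g s = 0" "a \<le> c"
    and small: "(\<Sum>i\<in>S. norm (d i) * (h powr \<beta> i / \<beta> i)) < 1"
  shows "AE t in lborel. t \<in> {c<..<c + h} \<longrightarrow> g t = 0"
proof -
  have [measurable]: "g \<in> borel_measurable borel"
    using g(1) by auto
  have "(\<integral>\<^sup>+ t. indicator {c<..<c + h} t * ennreal (norm (g t)) \<partial>lborel) \<le> (\<integral>\<^sup>+ t. ennreal (norm (g t)) \<partial>lborel)"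
    by (intro nn_integral_mono) (auto simp: indicator_def)
  also have "\<dots> < \<infinity>"
    using g(1) by (simp add: integrable_iff_bounded)
  finally have "(\<integral>\<^sup>+ t. indicator {c<..<c + h} t * ennreal (norm (g t)) \<partial>lborel) < \<infinity>" .
  with nn_integral_Volterra_step_le[OF _ g(2) S eq vanish] small
  have "(\<integral>\<^sup>+ t. indicator {c<..<c + h} t * ennreal (norm (g t)) \<partial>lborel) = 0"
    by (intro ennreal_le_mult_imp_zero) auto
  then have "AE t in lborel. indicator {c<..<c + h} t * ennreal (norm (g t)) = 0"
    by (subst (asm) nn_integral_0_iff_AE) auto
  then show ?thesis
    by eventually_elim (auto simp: indicator_def)
qed

lemma ex_pos_sum_powr_less_1:
  fixes S :: "'i set" and \<beta> w :: "'i \<Rightarrow> real"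
  assumes "finite S" "\<And>i. i \<in> S \<Longrightarrow> \<beta> i > 0"
  shows "\<exists>h>0. (\<Sum>i\<in>S. w i * (h powr \<beta> i / \<beta> i)) < 1"
proof -
  have "((\<lambda>h. \<Sum>i\<in>S. w i * (h powr \<beta> i / \<beta> i)) \<longlongrightarrow> 0) (at_right 0)"
  proof (intro tendsto_null_sum tendsto_mult_right_zero tendsto_divide_zero)
    fix i assume "i \<in> S"
    show "((\<lambda>h::real. h powr \<beta> i) \<longlongrightarrow> 0) (at_right 0)"
      using assms(2)[OF \<open>i \<in> S\<close>]
      by (intro tendsto_zero_powrI[OF _ tendsto_const]) (auto intro: tendsto_ident_at eventually_at_rightI[of 0 1])
  qed
  then have "\<forall>\<^sub>F h in at_right 0. 0 < h \<and> (\<Sum>i\<in>S. w i * (h powr \<beta> i / \<beta> i)) < 1"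
    by (intro eventually_conj eventually_at_right_less order_tendstoD(2)) auto
  then show ?thesis
    by (auto dest: eventually_happens'[OF trivial_limit_at_right_real])
qed

lemma RL_conv_Volterra_zero:
  fixes g :: "real \<Rightarrow> complex" and S :: "'i set" and \<beta> :: "'i \<Rightarrow> real" and d :: "'i \<Rightarrow> complex"
  assumes g: "integrable lborel g" "\<And>s. s \<notin> {a<..<b} \<Longrightarrow> g s = 0"
    and S: "finite S" "\<And>i. i \<in> S \<Longrightarrow> \<beta> i > 0"
    and eq: "AE t in lborel. t \<in> {a<..<b} \<longrightarrow> g t = (\<Sum>i\<in>S. d i * RL_conv a (\<beta> i) g t)"
  shows "AE t in lborel. g t = 0"
proof -
  obtain h where h: "h > 0" "(\<Sum>i\<in>S. norm (d i) * (h powr \<beta> i / \<beta> i)) < 1"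
    using ex_pos_sum_powr_less_1[OF S(1), of \<beta> "\<lambda>i. norm (d i)"] S(2) by blast
  have vanish: "AE s in lborel. s \<in> {a<..<a + real k * h} \<longrightarrow> g s = 0" for k :: nat
  proof (induction k)
    case (Suc k)
    define c where "c = a + real k * h"
    have "AE t in lborel. t \<in> {c<..<c + h} \<longrightarrow> g t = 0"
      using h by (intro RL_conv_Volterra_step[OF g S eq Suc[folded c_def]]) (auto simp: c_def)
    with Suc AE_lborel_singleton[of c] show ?case
    proof eventually_elim
      case (elim s)
      show ?case
      proof
        assume "s \<in> {a<..<a + real (Suc k) * h}"
        then have "s \<in> {a<..<c} \<or> s = c \<or> s \<in> {c<..<c + h}"
          by (auto simp: c_def algebra_simps)
        with elim show "g s = 0"
          by (auto simp: c_def)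
      qed
    qed
  qed simp
  obtain n :: nat where "(b - a) / h \<le> real n"
    using real_arch_simple by blast
  then have "b \<le> a + real n * h"
    using h by (simp add: field_simps)
  from vanish[of n] show ?thesis
    by eventually_elim (use g(2) \<open>b \<le> a + real n * h\<close> in force)
qed

lemma RL_int_Volterra_zero:
  fixes g :: "real \<Rightarrow> complex" and S :: "'i set" and \<beta> :: "'i \<Rightarrow> real" and d :: "'i \<Rightarrow> complex"
  assumes g: "integrable lborel g" "\<And>s. s \<notin> {a<..<b} \<Longrightarrow> g s = 0"
    and S: "finite S" "\<And>i. i \<in> S \<Longrightarrow> \<beta> i > 0"
    and eq: "AE t in lborel. t \<in> {a<..<b} \<longrightarrow> g t = (\<Sum>i\<in>S. d i * RL_int a (\<beta> i) g t)"
  shows "AE t in lborel. g t = 0"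
proof (rule RL_conv_Volterra_zero[OF g S])
  have normalise: "d i * RL_int a (\<beta> i) g t = d i * complex_of_real (1 / Gamma (\<beta> i)) * RL_conv a (\<beta> i) g t"
    if "i \<in> S" for i t
    using S(2)[OF that] by (simp add: RL_int_eq_RL_conv)
  from eq show "AE t in lborel. t \<in> {a<..<b} \<longrightarrow>
      g t = (\<Sum>i\<in>S. d i * complex_of_real (1 / Gamma (\<beta> i)) * RL_conv a (\<beta> i) g t)"
    by eventually_elim (simp add: normalise cong: sum.cong)
qed

section \<open>Injectivity\<close>

lemma RL_int_1: "RL_int a 1 g t = (LINT s:{a<..<t}|lborel. g s)"
  unfolding RL_int_def set_lebesgue_integral_def
  by (auto intro!: Bochner_Integration.integral_cong simp: indicator_def)

lemma AE_RL_int_eq_zero: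
  assumes "AE s in lborel. s \<in> {a<..<b} \<longrightarrow> g s = 0"
  shows "AE t in lborel. t \<in> {a<..<b} \<longrightarrow> RL_int a \<alpha> g t = 0"
proof (cases "\<alpha> = 0")
  case False
  have "(LINT s:{a<..<t}|lborel. complex_of_real ((t - s) powr (\<alpha> - 1)) * g s) = 0" if "t \<le> b" for t
    unfolding set_lebesgue_integral_def
    by (rule integral_eq_zero_AE) (use assms that in \<open>auto elim!: eventually_mono simp: indicator_def\<close>)
  with False show ?thesis
    by (auto simp: RL_int_def)
qed (use assms in simp)

lemma isCont_set_integral_greaterThanLessThan:
  fixes g :: "real \<Rightarrow> 'b::{banach, second_countable_topology}"
  assumes "integrable lborel g"
  shows "isCont (\<lambda>t. LINT s:{a<..<t}|lborel. g s) t0"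
proof (rule continuous_at_sequentiallyI)
  have [measurable]: "g \<in> borel_measurable borel"
    using assms by auto
  fix u :: "nat \<Rightarrow> real"
  assume u: "u \<longlonglongrightarrow> t0"
  have indicator_tendsto: "(\<lambda>n. indicator {a<..<u n} s :: real) \<longlonglongrightarrow> indicator {a<..<t0} s"
    if "s \<noteq> t0" for s
  proof (rule tendsto_eventually)
    from that consider "s < t0" | "t0 < s"
      by linarith
    then show "\<forall>\<^sub>F n in sequentially. indicator {a<..<u n} s = (indicator {a<..<t0} s :: real)"
    proof cases
      case 1
      from order_tendstoD(1)[OF u this] show ?thesis
        by eventually_elim (use 1 in \<open>auto simp: indicator_def\<close>)
    next
      case 2
      from order_tendstoD(2)[OF u this] show ?thesis
        by eventually_elim (use 2 in \<open>auto simp: indicator_def\<close>)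
    qed
  qed
  have "AE s in lborel. (\<lambda>n. indicator {a<..<u n} s *\<^sub>R g s) \<longlonglongrightarrow> indicator {a<..<t0} s *\<^sub>R g s"
    using AE_lborel_singleton[of t0] by eventually_elim (auto intro: tendsto_scaleR indicator_tendsto)
  then show "(\<lambda>n. LINT s:{a<..<u n}|lborel. g s) \<longlonglongrightarrow> (LINT s:{a<..<t0}|lborel. g s)"
    unfolding set_lebesgue_integral_def
    using assms by (intro integral_dominated_convergence[where w = "\<lambda>s. norm (g s)"]) (auto simp: indicator_def)
qed

lemma isCont_AE_zero_imp_zero:
  fixes F :: "real \<Rightarrow> 'b::real_normed_vector"
  assumes "isCont F t0" "AE t in lborel. t \<in> {a<..<b} \<longrightarrow> F t = 0" "a < b" "t0 \<in> {a..b}"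
  shows "F t0 = 0"
proof (rule ccontr)
  assume "F t0 \<noteq> 0"
  with assms(1) have "\<forall>\<^sub>F t in at t0. F t \<noteq> 0"
    unfolding isCont_def by (rule tendsto_imp_eventually_ne)
  then obtain e where e: "e > 0" "\<And>t. t \<noteq> t0 \<Longrightarrow> dist t t0 < e \<Longrightarrow> F t \<noteq> 0"
    unfolding eventually_at by auto
  define l where "l = max a (t0 - e)"
  define r where "r = min b (t0 + e)"
  have "l < r"
    using e assms(3,4) by (auto simp: l_def r_def)
  have "AE t in lborel. t \<notin> {l<..<r}"
    using assms(2) AE_lborel_singleton[of t0]
  proof eventually_elim
    case (elim t)
    show ?case
    proof
      assume "t \<in> {l<..<r}"
      then have "t \<in> {a<..<b}" "dist t t0 < e"
        by (auto simp: l_def r_def dist_real_def)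
      with elim e(2)[of t] show False
        by auto
    qed
  qed
  then have "emeasure lborel {t \<in> space lborel. t \<in> {l<..<r}} = 0"
    by (intro emeasure_eq_0_AE) simp
  moreover have "{t \<in> space lborel. t \<in> {l<..<r}} = {l<..<r}"
    by auto
  ultimately show False
    using \<open>l < r\<close> by simp
qed

lemma AE_zero_if_set_integrals_lessThan_zero:
  fixes g :: "real \<Rightarrow> 'b::{banach, second_countable_topology}"
  assumes g: "integrable lborel g" and total: "(\<integral> s. g s \<partial>lborel) = 0"
    and lessThan: "\<And>t. (LINT s:{..<t}|lborel. g s) = 0"
  shows "AE s in lborel. g s = 0"
proof (rule sigma_finite_measure.density_zero[OF sigma_finite_lborel g])
  fix A :: "real set"
  assume "A \<in> sets lborel"
  have sets_lborel_Iio: "sets lborel = sigma_sets UNIV (range lessThan :: real set set)"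
    unfolding sets_lborel borel_Iio by auto
  have "Int_stable (range lessThan :: real set set)"
    by (auto simp: Int_stable_def greaterThan_Int_greaterThan)
  moreover have "range lessThan \<subseteq> Pow (UNIV :: real set)"
    by simp
  moreover have "A \<in> sigma_sets UNIV (range lessThan)"
    using \<open>A \<in> sets lborel\<close> sets_lborel_Iio by simp
  ultimately show "(LINT s:A|lborel. g s) = 0"
  proof (induction rule: sigma_sets_induct_disjoint)
    case (compl A)
    have "A \<in> sets lborel"
      using compl.hyps sets_lborel_Iio by simp
    have "(LINT s:UNIV - A|lborel. g s) = (\<integral> s. g s - indicator A s *\<^sub>R g s \<partial>lborel)"
      unfolding set_lebesgue_integral_def
      by (intro Bochner_Integration.integral_cong) (auto simp: indicator_def)
    also have "\<dots> = (\<integral> s. g s \<partial>lborel) - (LINT s:A|lborel. g s)"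
      unfolding set_lebesgue_integral_def
      by (intro Bochner_Integration.integral_diff g integrable_mult_indicator \<open>A \<in> sets lborel\<close>)
    finally show ?case
      using compl.IH total by simp
  next
    case (union A)
    have "A i \<in> sets lborel" for i
      using union.hyps(2) sets_lborel_Iio by auto
    then have "(LINT s:(\<Union>i. A i)|lborel. g s) = (\<Sum>i. LINT s:A i|lborel. g s)"
      using union.hyps(1) g
      by (intro lebesgue_integral_countable_add)
         (auto simp: disjoint_family_on_def set_integrable_def intro!: integrable_mult_indicator)
    with union.IH show ?case
      by simp
  qed (use lessThan in \<open>auto simp: set_lebesgue_integral_def\<close>)
qed

lemma RL_int_1_injective:
  fixes g :: "real \<Rightarrow> complex"
  assumes g: "integrable lborel g" "\<And>s. s \<notin> {a<..<b} \<Longrightarrow> g s = 0" and "a < b"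
    and zero: "AE t in lborel. t \<in> {a<..<b} \<longrightarrow> RL_int a 1 g t = 0"
  shows "AE s in lborel. g s = 0"
proof (rule AE_zero_if_set_integrals_lessThan_zero[OF g(1)])
  have F_zero: "(LINT s:{a<..<t}|lborel. g s) = 0" if "t \<in> {a..b}" for t
  proof (rule isCont_AE_zero_imp_zero[OF isCont_set_integral_greaterThanLessThan[OF g(1)] _ \<open>a < b\<close> that])
    show "AE t in lborel. t \<in> {a<..<b} \<longrightarrow> (LINT s:{a<..<t}|lborel. g s) = 0"
      using zero by (simp add: RL_int_1)
  qed
  have restrict: "(LINT s:A|lborel. g s) = (LINT s:{a<..<m}|lborel. g s)"
    if "A \<inter> {a<..<b} = {a<..<m}" for A m
    unfolding set_lebesgue_integral_def
  proof (intro Bochner_Integration.integral_cong refl)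
    fix s
    show "indicator A s *\<^sub>R g s = indicator {a<..<m} s *\<^sub>R g s"
    proof (cases "s \<in> {a<..<b}")
      case True
      with that have "s \<in> A \<longleftrightarrow> s \<in> {a<..<m}"
        by blast
      then show ?thesis
        unfolding indicator_def by simp
    qed (simp add: g(2))
  qed
  show "(LINT s:{..<t}|lborel. g s) = 0" for t
  proof -
    have "{..<t} \<inter> {a<..<b} = {a<..<max a (min t b)}"
      by (auto simp: max_def min_def)
    from restrict[OF this] show ?thesis
      using F_zero[of "max a (min t b)"] \<open>a < b\<close> by simp
  qed
  show "(\<integral> s. g s \<partial>lborel) = 0"
    using restrict[of UNIV b] F_zero[of b] \<open>a < b\<close> by (simp add: set_lebesgue_integral_def)
qed

lemma RL_int_nat_injective:
  fixes g :: "real \<Rightarrow> complex" and m :: nat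
  assumes g: "integrable lborel g" "\<And>s. s \<notin> {a<..<b} \<Longrightarrow> g s = 0" and "a < b"
    and "AE t in lborel. t \<in> {a<..<b} \<longrightarrow> RL_int a (real m) g t = 0"
  shows "AE s in lborel. g s = 0"
  using assms(4)
proof (induction m)
  case 0
  then show ?case
    by eventually_elim (use g(2) in auto)
next
  case (Suc m)
  define u where "u = (\<lambda>t. indicator {a<..<b} t *\<^sub>R RL_int a (real m) g t)"
  have "AE t in lborel. t \<in> {a<..<b} \<longrightarrow> RL_int a 1 (RL_int a (real m) g) t = RL_int a (real m + 1) g t"
    by (rule RL_int_semigroup[OF g(1)]) auto
  with Suc.prems have "AE t in lborel. t \<in> {a<..<b} \<longrightarrow> RL_int a 1 u t = 0"
    by eventually_elim (simp add: u_def RL_int_restrict add.commute)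
  then have "AE t in lborel. u t = 0"
    using integrable_RL_int[OF g(1)] \<open>a < b\<close>
    by (intro RL_int_1_injective[of u a b]) (auto simp: u_def)
  then have "AE t in lborel. t \<in> {a<..<b} \<longrightarrow> RL_int a (real m) g t = 0"
    by eventually_elim (auto simp: u_def)
  then show ?case
    by (rule Suc.IH)
qed

lemma RL_int_injective:
  fixes g :: "real \<Rightarrow> complex"
  assumes g: "integrable lborel g" "\<And>s. s \<notin> {a<..<b} \<Longrightarrow> g s = 0" and "a < b" and "\<alpha> \<ge> 0"
    and zero: "AE t in lborel. t \<in> {a<..<b} \<longrightarrow> RL_int a \<alpha> g t = 0"
  shows "AE s in lborel. g s = 0"
proof -
  define m where "m = nat \<lceil>\<alpha>\<rceil>"
  have "real m - \<alpha> \<ge> 0"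
    using \<open>\<alpha> \<ge> 0\<close> by (simp add: m_def)
  from RL_int_semigroup[OF g(1) \<open>\<alpha> \<ge> 0\<close> this, of a b] AE_RL_int_eq_zero[OF zero, of "real m - \<alpha>"]
  have "AE t in lborel. t \<in> {a<..<b} \<longrightarrow> RL_int a (real m) g t = 0"
    by eventually_elim simp
  then show ?thesis
    using RL_int_nat_injective[OF g \<open>a < b\<close>] by blast
qed

section \<open>Uniqueness\<close>

lemma RL_int_restrict_diff:
  fixes x y :: "real \<Rightarrow> complex"
  assumes "set_integrable lborel {a<..<b} x" "set_integrable lborel {a<..<b} y" "\<alpha> \<ge> 0"
  shows "AE t in lborel. t \<in> {a<..<b} \<longrightarrow>
    RL_int a \<alpha> (\<lambda>s. indicator {a<..<b} s *\<^sub>R (x s - y s)) t = RL_int a \<alpha> x t - RL_int a \<alpha> y t"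
proof (cases "\<alpha> = 0")
  case False
  with assms(3) have "\<alpha> > 0"
    by simp
  define x' where "x' = (\<lambda>s. indicator {a<..<b} s *\<^sub>R x s)"
  define y' where "y' = (\<lambda>s. indicator {a<..<b} s *\<^sub>R y s)"
  have x': "integrable lborel x'" and y': "integrable lborel y'"
    using assms(1,2) by (simp_all add: x'_def y'_def set_integrable_def)
  then have [measurable]: "x' \<in> borel_measurable borel" "y' \<in> borel_measurable borel"
    by auto
  from AE_nn_integral_RL_kernel_finite[OF x' \<open>\<alpha> > 0\<close>, of a b]
    AE_nn_integral_RL_kernel_finite[OF y' \<open>\<alpha> > 0\<close>, of a b]
  show ?thesis
  proof eventually_elim
    case (elim t)
    show ?case
    proof
      assume t: "t \<in> {a<..<b}"
      have "RL_conv a \<alpha> (\<lambda>s. indicator {a<..<b} s *\<^sub>R (x s - y s)) t = RL_conv a \<alpha> (\<lambda>s. x' s - y' s) t"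
        by (simp add: x'_def y'_def scaleR_diff_right)
      also have "\<dots> = RL_conv a \<alpha> x' t - RL_conv a \<alpha> y' t"
        by (rule RL_conv_diff) (use elim t in auto)
      also have "\<dots> = RL_conv a \<alpha> x t - RL_conv a \<alpha> y t"
        using t by (simp add: x'_def y'_def RL_conv_restrict)
      finally show "RL_int a \<alpha> (\<lambda>s. indicator {a<..<b} s *\<^sub>R (x s - y s)) t = RL_int a \<alpha> x t - RL_int a \<alpha> y t"
        using False by (simp add: RL_int_eq_RL_conv right_diff_distrib)
    qed
  qed
qed (simp add: indicator_def)

lemma RL_int_sum_lowest_order_injective:
  fixes g :: "real \<Rightarrow> complex" and S :: "'i set" and r :: "'i \<Rightarrow> real" and c :: "'i \<Rightarrow> complex"
  assumes g: "integrable lborel g" "\<And>s. s \<notin> {a<..<b} \<Longrightarrow> g s = 0" and "a < b"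
    and S: "finite S" "\<And>i. i \<in> S \<Longrightarrow> r i > \<alpha>" and "\<alpha> \<ge> 0" "c0 \<noteq> 0"
    and eq: "AE t in lborel. t \<in> {a<..<b} \<longrightarrow> c0 * RL_int a \<alpha> g t + (\<Sum>i\<in>S. c i * RL_int a (r i) g t) = 0"
  shows "AE s in lborel. g s = 0"
proof -
  define u where "u = (\<lambda>t. indicator {a<..<b} t *\<^sub>R RL_int a \<alpha> g t)"
  have "AE t in lborel. \<forall>i\<in>S. t \<in> {a<..<b} \<longrightarrow> RL_int a (r i - \<alpha>) (RL_int a \<alpha> g) t = RL_int a (r i) g t"
  proof (intro eventually_ball_finite[OF S(1)] ballI)
    fix i assume "i \<in> S"
    then have "r i - \<alpha> \<ge> 0"
      using S(2) by force
    from RL_int_semigroup[OF g(1) \<open>\<alpha> \<ge> 0\<close> this, of a b]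
    show "AE t in lborel. t \<in> {a<..<b} \<longrightarrow> RL_int a (r i - \<alpha>) (RL_int a \<alpha> g) t = RL_int a (r i) g t"
      by simp
  qed
  with eq have Volterra: "AE t in lborel. t \<in> {a<..<b} \<longrightarrow> u t = (\<Sum>i\<in>S. (- c i / c0) * RL_int a (r i - \<alpha>) u t)"
  proof eventually_elim
    case (elim t)
    show ?case
    proof
      assume t: "t \<in> {a<..<b}"
      with elim have "c0 * u t = - (\<Sum>i\<in>S. c i * RL_int a (r i - \<alpha>) u t)"
        by (simp add: u_def RL_int_restrict eq_neg_iff_add_eq_0 cong: sum.cong)
      with \<open>c0 \<noteq> 0\<close> have "u t = - (\<Sum>i\<in>S. c i * RL_int a (r i - \<alpha>) u t) / c0"
        by (simp add: field_simps)
      then show "u t = (\<Sum>i\<in>S. (- c i / c0) * RL_int a (r i - \<alpha>) u t)"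
        by (simp add: sum_divide_distrib sum_negf)
    qed
  qed
  have "integrable lborel u"
    unfolding u_def by (rule integrable_RL_int[OF g(1) \<open>\<alpha> \<ge> 0\<close>])
  then have "AE t in lborel. u t = 0"
    by (rule RL_int_Volterra_zero[OF _ _ S(1) _ Volterra]) (use S(2) in \<open>auto simp: u_def\<close>)
  then have "AE t in lborel. t \<in> {a<..<b} \<longrightarrow> RL_int a \<alpha> g t = 0"
    by eventually_elim (auto simp: u_def)
  then show ?thesis
    using RL_int_injective[OF g \<open>a < b\<close> \<open>\<alpha> \<ge> 0\<close>] by blast
qed

lemma RL_int_sum_injective:
  fixes g :: "real \<Rightarrow> complex" and I :: "'i set" and r :: "'i \<Rightarrow> real" and c :: "'i \<Rightarrow> complex"
  assumes g: "integrable lborel g" "\<And>s. s \<notin> {a<..<b} \<Longrightarrow> g s = 0" and "a < b"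
    and I: "finite I" "\<And>i. i \<in> I \<Longrightarrow> r i \<ge> 0" "inj_on r I" "\<exists>i\<in>I. c i \<noteq> 0"
    and eq: "AE t in lborel. t \<in> {a<..<b} \<longrightarrow> (\<Sum>i\<in>I. c i * RL_int a (r i) g t) = 0"
  shows "AE s in lborel. g s = 0"
proof -
  define S where "S = {i \<in> I. c i \<noteq> 0}"
  have "finite S" "S \<noteq> {}"
    using I by (auto simp: S_def)
  then obtain i0 where i0: "i0 \<in> S" "r i0 = Min (r ` S)"
    by (metis (mono_tags, lifting) Min_in finite_imageI image_iff image_is_empty)
  have lower: "r i > r i0" if "i \<in> S - {i0}" for i
  proof -
    have "r i0 \<le> r i"
      using that i0 \<open>finite S\<close> by auto
    moreover have "r i \<noteq> r i0"
      using that i0(1) I(3) by (auto simp: S_def inj_on_def)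
    ultimately show ?thesis
      by simp
  qed
  have "(\<Sum>i\<in>I. c i * RL_int a (r i) g t) = c i0 * RL_int a (r i0) g t + (\<Sum>i\<in>S - {i0}. c i * RL_int a (r i) g t)"
    for t
  proof -
    have "(\<Sum>i\<in>I. c i * RL_int a (r i) g t) = (\<Sum>i\<in>S. c i * RL_int a (r i) g t)"
      using I(1) by (intro sum.mono_neutral_right) (auto simp: S_def)
    with i0(1) \<open>finite S\<close> show ?thesis
      by (simp add: sum.remove)
  qed
  with eq have "AE t in lborel. t \<in> {a<..<b} \<longrightarrow>
      c i0 * RL_int a (r i0) g t + (\<Sum>i\<in>S - {i0}. c i * RL_int a (r i) g t) = 0"
    by simp
  then show ?thesis
    using i0(1) I(2) \<open>finite S\<close> lower
    by (intro RL_int_sum_lowest_order_injective[OF g(1) _ \<open>a < b\<close>, of "S - {i0}" "r i0"]) (auto simp: S_def g(2))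
qed

theorem mainTheorem7:
  fixes a b :: real and n :: nat and r :: "nat \<Rightarrow> real" and c :: "nat \<Rightarrow> complex"
    and f x y :: "real \<Rightarrow> complex"
  assumes "a < b"
    and "set_integrable lborel {a<..<b} f"
    and "\<forall>i<n. r i \<in> \<rat> \<and> r i \<ge> 0"
    and "inj_on r {..<n}"
    and "\<exists>i<n. c i \<noteq> 0"
    and "set_integrable lborel {a<..<b} x"
    and "AE t in lborel. t \<in> {a<..<b} \<longrightarrow> (\<Sum>i<n. c i * RL_int a (r i) x t) = f t"
    and "set_integrable lborel {a<..<b} y"
    and "AE t in lborel. t \<in> {a<..<b} \<longrightarrow> (\<Sum>i<n. c i * RL_int a (r i) y t) = f t"
  shows "AE t in lborel. t \<in> {a<..<b} \<longrightarrow> x t = y t"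
proof -
  define z where "z = (\<lambda>s. indicator {a<..<b} s *\<^sub>R (x s - y s))"
  have z: "integrable lborel z" "\<And>s. s \<notin> {a<..<b} \<Longrightarrow> z s = 0"
    using set_integral_diff(1)[OF assms(6,8)] by (simp_all add: z_def set_integrable_def)
  have "AE t in lborel. \<forall>i\<in>{..<n}. t \<in> {a<..<b} \<longrightarrow>
      RL_int a (r i) z t = RL_int a (r i) x t - RL_int a (r i) y t"
    using assms(3) unfolding z_def
    by (intro eventually_ball_finite ballI RL_int_restrict_diff assms(6,8)) auto
  with assms(7,9) have "AE t in lborel. t \<in> {a<..<b} \<longrightarrow> (\<Sum>i<n. c i * RL_int a (r i) z t) = 0"
    by eventually_elim (simp add: right_diff_distrib sum_subtractf)
  then have "AE s in lborel. z s = 0"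
    using assms(1,3,4,5) by (intro RL_int_sum_injective[OF z(1) _ \<open>a < b\<close>, of "{..<n}" r c]) (auto simp: z(2))
  then show ?thesis
    by eventually_elim (auto simp: z_def)
qed

end
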